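(* Let $\alpha\neq 0$ and let $\Sigma_1$ and $\Sigma_2$ be two $\alpha$-singular maximal surfaces. If $\Sigma_1$ and $\Sigma_2$ have a common tangent interior point $p$ and $\Sigma_1$ lies above $\Sigma_2$ around $p$, then $\Sigma_1$ and $\Sigma_2$ coincide in an open set around $p$.
   Context: $\mathbb L^3$ is $\mathbb R^3$ with the metric $dx^2+dy^2-dz^2$. An $\alpha$-singular maximal surface is a spacelike surface (Riemannian induced metric, timelike unit normal $N$) in the halfspace $z>0$ satisfying $H(p)=-\alpha\frac{\langle N(p),(0,0,1)\rangle}{z}$, where $H$ is the trace of the second fundamental form; locally it is a graph $z=u(x,y)$ with $|Du|<1$ solving $\mathrm{div}\frac{Du}{\sqrt{1-|Du|^2}}=\frac{\alpha}{u\sqrt{1-|Du|^2}}$. "Above" refers to the $z$-direction. *)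

theory Defs
  imports "HOL-Analysis.Analysis"
begin

text \<open>A point of the (x,y)-plane is a pair in real * real; a piece of spacelike
surface is a graph z = u(x,y) over an open set Omega.\<close>

definition is_gradient_on ::
  "(real \<times> real) set \<Rightarrow> (real \<times> real \<Rightarrow> real) \<Rightarrow> (real \<times> real \<Rightarrow> real \<times> real) \<Rightarrow> bool" where
  "is_gradient_on \<Omega> u g \<longleftrightarrow> (\<forall>p\<in>\<Omega>. (u has_derivative (\<lambda>h. g p \<bullet> h)) (at p))"

definition divergence :: "(real \<times> real \<Rightarrow> real \<times> real) \<Rightarrow> real \<times> real \<Rightarrow> real" where
  "divergence V p = (let D = (SOME D. (V has_derivative D) (at p)) in
       fst (D (1, 0)) + snd (D (0, 1)))"

definition alpha_singular_maximal_graph ::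
  "real \<Rightarrow> (real \<times> real) set \<Rightarrow> (real \<times> real \<Rightarrow> real) \<Rightarrow> bool" where
  "alpha_singular_maximal_graph \<alpha> \<Omega> u \<longleftrightarrow>
     open \<Omega> \<and>
     (\<exists>g D2. is_gradient_on \<Omega> u g \<and>
        (\<forall>p\<in>\<Omega>. (g has_derivative D2 p) (at p)) \<and>
        (\<forall>v. continuous_on \<Omega> (\<lambda>p. D2 p v)) \<and>
        (\<forall>p\<in>\<Omega>. u p > 0) \<and>
        (\<forall>p\<in>\<Omega>. norm (g p) < 1) \<and>
        (\<forall>p\<in>\<Omega>. divergence (\<lambda>q. (1 / sqrt (1 - (norm (g q))\<^sup>2)) *\<^sub>R g q) p
                   = \<alpha> / (u p * sqrt (1 - (norm (g p))\<^sup>2))))"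

end

theory Submission
  imports Defs
begin

text \<open>Hopf's boundary point argument.  Let w = u1 - u2 \<ge> 0 and assume w > 0 somewhere
near the contact point p.  Take a ball B(z,R) on which w > 0 touching the zero set of w
at q.  On the annulus R/2 \<le> |x - z| \<le> R the function w dominates the barrier
m0 (exp(-\<lambda>|x-z|^2) - exp(-\<lambda>R^2)) for large \<lambda>: at an interior minimum of the difference,
subtracting the two equations (written in non-divergence form) and using the second order
conditions gives a bound of order \<lambda> m0 against a lower bound of order \<lambda>^2 m0.  The barrier
has nonzero radial derivative at q, so Dw(q) \<noteq> 0, contradicting the tangency of the
graphs at the minimum point q of w.\<close>

definition plane_trace :: "(real \<times> real \<Rightarrow> real \<times> real) \<Rightarrow> real" where
  "plane_trace X = fst (X (1,0)) + snd (X (0,1))"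

text \<open>With W = sqrt(1 - |Du|^2) one has W^3 div(Du/W) = maximal_operator (Du) (D^2u), so the
equation of an \<alpha>-singular maximal graph reads maximal_operator (Du) (D^2u) = \<alpha> W^2 / u.\<close>

definition maximal_operator :: "real \<times> real \<Rightarrow> (real \<times> real \<Rightarrow> real \<times> real) \<Rightarrow> real" where
  "maximal_operator P X = (1 - P \<bullet> P) * plane_trace X + P \<bullet> X P"

lemma maximal_operator_diff:
  "maximal_operator P (\<lambda>h. X1 h - X2 h - c *\<^sub>R X3 h)
     = maximal_operator P X1 - maximal_operator P X2 - c * maximal_operator P X3"
  unfolding maximal_operator_def plane_trace_def by (simp add: inner_diff_right algebra_simps)

lemma maximal_operator_nonneg:
  assumes "\<And>h. Y h \<bullet> h \<ge> 0" and "P \<bullet> P \<le> 1"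
  shows "maximal_operator P Y \<ge> 0"
proof -
  have "fst (Y (1,0)) = Y (1,0) \<bullet> (1,0)" "snd (Y (0,1)) = Y (0,1) \<bullet> (0,1)"
    by (cases "Y (1,0)"; simp) (cases "Y (0,1)"; simp)
  then have "plane_trace Y \<ge> 0"
    unfolding plane_trace_def using assms(1)[of "(1,0)"] assms(1)[of "(0,1)"] by simp
  moreover have "P \<bullet> Y P \<ge> 0" using assms(1)[of P] by (simp add: inner_commute)
  ultimately show ?thesis unfolding maximal_operator_def using assms(2) by simp
qed

lemma linear_apply_coordinates:
  fixes X :: "real \<times> real \<Rightarrow> 'a::real_vector"
  assumes "linear X"
  shows "X P = fst P *\<^sub>R X (1,0) + snd P *\<^sub>R X (0,1)"
proof -
  have "X P = X (fst P *\<^sub>R (1,0) + snd P *\<^sub>R (0,1))" by (cases P) simp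
  also have "\<dots> = fst P *\<^sub>R X (1,0) + snd P *\<^sub>R X (0,1)"
    by (simp only: linear_add[OF assms] linear_cmul[OF assms])
  finally show ?thesis .
qed

lemma maximal_operator_coordinates:
  assumes "linear X"
  shows "maximal_operator P X = fst (X (1,0)) + snd (X (0,1))
     - (fst P)\<^sup>2 * snd (X (0,1)) - (snd P)\<^sup>2 * fst (X (1,0))
     + fst P * snd P * (snd (X (1,0)) + fst (X (0,1)))"
proof -
  note XP = linear_apply_coordinates[OF assms, of P]
  show ?thesis unfolding maximal_operator_def plane_trace_def XP
    by (cases P; cases "X (1,0)"; cases "X (0,1)") (simp add: algebra_simps power2_eq_square)
qed

lemma abs_diff_square_le:
  fixes a b d :: real
  assumes "\<bar>a - b\<bar> \<le> d" "\<bar>a\<bar> \<le> 1" "\<bar>b\<bar> \<le> 1"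
  shows "\<bar>a\<^sup>2 - b\<^sup>2\<bar> \<le> 2 * d"
proof -
  have "\<bar>a\<^sup>2 - b\<^sup>2\<bar> = \<bar>a - b\<bar> * \<bar>a + b\<bar>"
    by (simp add: power2_eq_square algebra_simps abs_mult[symmetric])
  also have "\<dots> \<le> d * 2" using assms by (intro mult_mono) auto
  finally show ?thesis by simp
qed

lemma abs_diff_mult_le:
  fixes a1 a2 b1 b2 d :: real
  assumes "\<bar>a1 - b1\<bar> \<le> d" "\<bar>a2 - b2\<bar> \<le> d" "\<bar>a1\<bar> \<le> 1" "\<bar>b2\<bar> \<le> 1"
  shows "\<bar>a1 * a2 - b1 * b2\<bar> \<le> 2 * d"
proof -
  have "a1 * a2 - b1 * b2 = a1 * (a2 - b2) + (a1 - b1) * b2" by (simp add: algebra_simps)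
  then have "\<bar>a1 * a2 - b1 * b2\<bar> \<le> \<bar>a1\<bar> * \<bar>a2 - b2\<bar> + \<bar>a1 - b1\<bar> * \<bar>b2\<bar>"
    by (metis abs_mult abs_triangle_ineq)
  also have "\<dots> \<le> 1 * d + d * 1" using assms by (intro add_mono mult_mono) auto
  finally show ?thesis by simp
qed

lemma abs_fst_le_norm: "\<bar>fst (x :: real \<times> real)\<bar> \<le> norm x"
  by (metis norm_fst_le prod.collapse real_norm_def)

lemma abs_snd_le_norm: "\<bar>snd (x :: real \<times> real)\<bar> \<le> norm x"
  by (metis norm_snd_le prod.collapse real_norm_def)

lemma maximal_operator_lipschitz:
  assumes "linear X" "norm (X (1,0)) \<le> M" "norm (X (0,1)) \<le> M" "norm P \<le> 1" "norm G \<le> 1"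
  shows "\<bar>maximal_operator P X - maximal_operator G X\<bar> \<le> 8 * M * norm (P - G)"
proof -
  define d where "d = norm (P - G)"
  have "\<bar>fst P - fst G\<bar> \<le> d" "\<bar>snd P - snd G\<bar> \<le> d"
    unfolding d_def using abs_fst_le_norm[of "P - G"] abs_snd_le_norm[of "P - G"] by auto
  moreover have "\<bar>fst P\<bar> \<le> 1" "\<bar>snd P\<bar> \<le> 1" "\<bar>fst G\<bar> \<le> 1" "\<bar>snd G\<bar> \<le> 1"
    using abs_fst_le_norm[of P] abs_snd_le_norm[of P] abs_fst_le_norm[of G] abs_snd_le_norm[of G]
      assms(4,5) by auto
  ultimately have s1: "\<bar>(fst P)\<^sup>2 - (fst G)\<^sup>2\<bar> \<le> 2 * d"
    and s2: "\<bar>(snd P)\<^sup>2 - (snd G)\<^sup>2\<bar> \<le> 2 * d"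
    and s3: "\<bar>fst P * snd P - fst G * snd G\<bar> \<le> 2 * d"
    using abs_diff_square_le abs_diff_mult_le by blast+
  obtain a b c e where abce: "X (1,0) = (a, b)" "X (0,1) = (c, e)" by (meson prod.exhaust)
  have M: "\<bar>a\<bar> \<le> M" "\<bar>b\<bar> \<le> M" "\<bar>c\<bar> \<le> M" "\<bar>e\<bar> \<le> M"
    using assms(2,3) abs_fst_le_norm[of "X (1,0)"] abs_snd_le_norm[of "X (1,0)"]
      abs_fst_le_norm[of "X (0,1)"] abs_snd_le_norm[of "X (0,1)"] abce by auto
  have "maximal_operator P X - maximal_operator G X = - ((fst P)\<^sup>2 - (fst G)\<^sup>2) * e
      - ((snd P)\<^sup>2 - (snd G)\<^sup>2) * a + (fst P * snd P - fst G * snd G) * (b + c)"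
    unfolding maximal_operator_coordinates[OF assms(1)] abce by (simp add: algebra_simps)
  also have "\<bar>\<dots>\<bar> \<le> \<bar>(fst P)\<^sup>2 - (fst G)\<^sup>2\<bar> * \<bar>e\<bar> + \<bar>(snd P)\<^sup>2 - (snd G)\<^sup>2\<bar> * \<bar>a\<bar>
      + \<bar>fst P * snd P - fst G * snd G\<bar> * \<bar>b + c\<bar>"
    unfolding abs_mult[symmetric] by linarith
  also have "\<dots> \<le> (2 * d) * M + (2 * d) * M + (2 * d) * (2 * M)"
    using s1 s2 s3 M abs_triangle_ineq[of b c] by (intro add_mono mult_mono) (auto simp: d_def)
  finally show ?thesis unfolding d_def by simp
qed

lemma maximal_operator_gaussian_hessian_ge:
  fixes y P :: "real \<times> real"
  assumes "\<theta> \<le> 1 - P \<bullet> P" "\<theta> > 0" "e > 0" "lam > 0"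
  shows "maximal_operator P (\<lambda>h. (-2*lam*e) *\<^sub>R h + (4*lam\<^sup>2*e*(y \<bullet> h)) *\<^sub>R y)
    \<ge> 4*lam*e*(lam*\<theta>*(y \<bullet> y) - 1)"
proof -
  have tr: "plane_trace (\<lambda>h. (-2*lam*e) *\<^sub>R h + (4*lam\<^sup>2*e*(y \<bullet> h)) *\<^sub>R y)
      = -4*lam*e + 4*lam\<^sup>2*e*(y \<bullet> y)"
    unfolding plane_trace_def by (cases y) (simp add: algebra_simps power2_eq_square)
  have quad: "P \<bullet> ((-2*lam*e) *\<^sub>R P + (4*lam\<^sup>2*e*(y \<bullet> P)) *\<^sub>R y)
      = -2*lam*e*(P \<bullet> P) + 4*lam\<^sup>2*e*(y \<bullet> P)\<^sup>2"
    by (simp add: inner_add_right inner_commute power2_eq_square algebra_simps)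
  have "(1 - P \<bullet> P) * (4*lam\<^sup>2*e*(y \<bullet> y)) \<ge> \<theta> * (4*lam\<^sup>2*e*(y \<bullet> y))"
    using assms by (intro mult_right_mono) auto
  moreover have "4*lam\<^sup>2*e*(y \<bullet> P)\<^sup>2 \<ge> 0" "2*lam*e*(P \<bullet> P) \<ge> 0" using assms by auto
  ultimately show ?thesis unfolding maximal_operator_def tr quad
    by (simp add: algebra_simps power2_eq_square)
qed

lemma singular_term_diff_le:
  fixes P G :: "real \<times> real"
  assumes "m > 0" "m \<le> u1" "m \<le> u2" "0 \<le> u1 - u2" "u1 - u2 \<le> \<delta>"
    and "norm P \<le> 1" "norm G \<le> 1"
  shows "\<alpha> * (1 - P \<bullet> P) / u1 - \<alpha> * (1 - G \<bullet> G) / u2 \<le> \<bar>\<alpha>\<bar> * (\<delta> / m\<^sup>2 + 2 * norm (P - G) / m)"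
proof -
  have u: "u1 > 0" "u2 > 0" using assms by auto
  have PP: "0 \<le> P \<bullet> P" "P \<bullet> P \<le> 1"
    using assms(6) by (auto simp: norm_eq_sqrt_inner real_sqrt_le_1_iff)
  have split: "(1 - P \<bullet> P) / u1 - (1 - G \<bullet> G) / u2
      = (1 - P \<bullet> P) * (u2 - u1) / (u1 * u2) + (G \<bullet> G - P \<bullet> P) / u2"
    using u by (simp add: field_simps)
  have a1: "\<bar>(1 - P \<bullet> P) * (u2 - u1) / (u1 * u2)\<bar> \<le> \<delta> / m\<^sup>2"
  proof -
    have "\<bar>(1 - P \<bullet> P) * (u2 - u1)\<bar> \<le> 1 * \<delta>"
      unfolding abs_mult using assms PP by (intro mult_mono) auto
    moreover have "m\<^sup>2 \<le> u1 * u2" using assms by (simp add: power2_eq_square mult_mono)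
    ultimately have "\<bar>(1 - P \<bullet> P) * (u2 - u1)\<bar> / (u1 * u2) \<le> \<delta> / m\<^sup>2"
      using u assms by (intro frac_le) auto
    then show ?thesis using u by (simp add: abs_divide abs_mult)
  qed
  have a2: "\<bar>(G \<bullet> G - P \<bullet> P) / u2\<bar> \<le> 2 * norm (P - G) / m"
  proof -
    have "\<bar>G \<bullet> G - P \<bullet> P\<bar> = \<bar>(G - P) \<bullet> (G + P)\<bar>" by (simp add: algebra_simps inner_commute)
    also have "\<dots> \<le> norm (G - P) * norm (G + P)" by (rule Cauchy_Schwarz_ineq2)
    also have "\<dots> \<le> norm (P - G) * 2"
      using assms norm_triangle_ineq[of G P]
      by (simp only: norm_minus_commute[of G P]) (intro mult_left_mono, auto)
    finally have "\<bar>G \<bullet> G - P \<bullet> P\<bar> \<le> 2 * norm (P - G)" by simp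
    then show ?thesis using u assms by (simp add: abs_divide) (intro frac_le, auto)
  qed
  have "\<alpha> * (1 - P \<bullet> P) / u1 - \<alpha> * (1 - G \<bullet> G) / u2 = \<alpha> * ((1 - P \<bullet> P) / u1 - (1 - G \<bullet> G) / u2)"
    by (simp add: algebra_simps)
  also have "\<dots> \<le> \<bar>\<alpha>\<bar> * \<bar>(1 - P \<bullet> P) / u1 - (1 - G \<bullet> G) / u2\<bar>"
    by (metis abs_ge_self abs_mult)
  also have "\<dots> \<le> \<bar>\<alpha>\<bar> * (\<delta> / m\<^sup>2 + 2 * norm (P - G) / m)"
    unfolding split
    using a1 a2 abs_triangle_ineq[of "(1 - P \<bullet> P) * (u2 - u1) / (u1 * u2)" "(G \<bullet> G - P \<bullet> P) / u2"]
    by (intro mult_left_mono) auto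
  finally show ?thesis .
qed

lemma maximal_operator_gap_le:
  fixes P G :: "real \<times> real" and X1 X2 :: "real \<times> real \<Rightarrow> real \<times> real"
  assumes "maximal_operator P X1 = \<alpha> * (1 - P \<bullet> P) / u1"
    and "maximal_operator G X2 = \<alpha> * (1 - G \<bullet> G) / u2"
    and "m > 0" "m \<le> u1" "m \<le> u2" "0 \<le> u1 - u2" "u1 - u2 \<le> \<delta>"
    and "norm P \<le> 1" "norm G \<le> 1"
    and "linear X2" "norm (X2 (1,0)) \<le> M" "norm (X2 (0,1)) \<le> M"
  shows "maximal_operator P X1 - maximal_operator P X2
    \<le> \<bar>\<alpha>\<bar> * (\<delta> / m\<^sup>2 + 2 * norm (P - G) / m) + 8 * M * norm (P - G)"
proof -
  have "maximal_operator P X1 - maximal_operator G X2 \<le> \<bar>\<alpha>\<bar> * (\<delta> / m\<^sup>2 + 2 * norm (P - G) / m)"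
    unfolding assms(1,2) using assms(3-9) by (rule singular_term_diff_le)
  moreover have "maximal_operator G X2 - maximal_operator P X2 \<le> 8 * M * norm (P - G)"
    using maximal_operator_lipschitz[OF assms(10-12,8,9)] by linarith
  ultimately show ?thesis by linarith
qed

text \<open>The algebraic core of the barrier argument: at an interior minimum of
u1 - u2 - \<epsilon> exp(-\<lambda>|x - z|^2), with y = x - z and e = exp(-\<lambda>|y|^2), the relations between the
first and second derivatives are incompatible with the two equations once \<lambda> is large.\<close>

lemma maximal_operator_barrier_absurd:
  fixes P G y :: "real \<times> real" and X1 X2 :: "real \<times> real \<Rightarrow> real \<times> real"
  assumes eq1: "maximal_operator P X1 = \<alpha> * (1 - P \<bullet> P) / u1"
    and eq2: "maximal_operator G X2 = \<alpha> * (1 - G \<bullet> G) / u2"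
    and m: "m > 0" "m \<le> u1" "m \<le> u2" and w: "0 \<le> u1 - u2" "u1 - u2 \<le> \<epsilon> * e"
    and \<theta>: "\<theta> > 0" "\<theta> \<le> 1 - P \<bullet> P" and G: "norm G \<le> 1"
    and X2: "linear X2" "norm (X2 (1,0)) \<le> M" "norm (X2 (0,1)) \<le> M"
    and hess: "\<And>h. (X1 h - X2 h - \<epsilon> *\<^sub>R ((-2*lam*e) *\<^sub>R h + (4*lam\<^sup>2*e*(y \<bullet> h)) *\<^sub>R y)) \<bullet> h \<ge> 0"
    and grad: "P - G = \<epsilon> *\<^sub>R ((-2*lam*e) *\<^sub>R y)"
    and pos: "\<epsilon> > 0" "e > 0" "lam \<ge> 1" and y: "R/2 \<le> norm y" "norm y \<le> R"
    and big: "lam*\<theta>*R\<^sup>2/4 > 1 + \<bar>\<alpha>\<bar>/(4*m\<^sup>2) + (\<bar>\<alpha>\<bar>/m + 4*M) * R"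
  shows False
proof -
  define Xg where "Xg = (\<lambda>h. (-2*lam*e) *\<^sub>R h + (4*lam\<^sup>2*e*(y \<bullet> h)) *\<^sub>R y)"
  define r where "r = norm y"
  have M: "M \<ge> 0" using X2(2) norm_ge_zero order_trans by blast
  have PP: "P \<bullet> P \<le> 1" using \<theta> by auto
  then have P: "norm P \<le> 1" by (simp add: norm_eq_sqrt_inner)
  have PG: "norm (P - G) = \<epsilon> * 2 * lam * e * r"
    unfolding grad r_def using pos by simp
  have "\<epsilon> * (4*lam*e*(lam*\<theta>*r\<^sup>2 - 1)) \<le> \<epsilon> * maximal_operator P Xg"
    using maximal_operator_gaussian_hessian_ge[OF \<theta>(2,1), of e lam y] pos
    unfolding Xg_def r_def power2_norm_eq_inner by (intro mult_left_mono) auto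
  also have "\<dots> \<le> maximal_operator P X1 - maximal_operator P X2"
    using maximal_operator_nonneg[of "\<lambda>h. X1 h - X2 h - \<epsilon> *\<^sub>R Xg h" P] hess PP
    unfolding maximal_operator_diff Xg_def by auto
  also have "\<dots> \<le> \<bar>\<alpha>\<bar> * (\<epsilon> * e / m\<^sup>2 + 2 * norm (P - G) / m) + 8 * M * norm (P - G)"
    by (rule maximal_operator_gap_le[OF eq1 eq2 m w P G X2])
  also have "\<dots> = 4*\<epsilon>*lam*e * (\<bar>\<alpha>\<bar> / (4 * lam * m\<^sup>2) + (\<bar>\<alpha>\<bar>/m + 4*M) * r)"
    unfolding PG using pos m by (simp add: field_simps)
  finally have "4*\<epsilon>*lam*e * (lam*\<theta>*r\<^sup>2 - 1)
      \<le> 4*\<epsilon>*lam*e * (\<bar>\<alpha>\<bar> / (4 * lam * m\<^sup>2) + (\<bar>\<alpha>\<bar>/m + 4*M) * r)"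
    by (simp add: algebra_simps)
  then have "lam*\<theta>*r\<^sup>2 - 1 \<le> \<bar>\<alpha>\<bar> / (4 * lam * m\<^sup>2) + (\<bar>\<alpha>\<bar>/m + 4*M) * r"
    using pos by (simp add: mult_le_cancel_left_pos)
  moreover have "\<bar>\<alpha>\<bar> / (4 * lam * m\<^sup>2) \<le> \<bar>\<alpha>\<bar> / (4 * m\<^sup>2)"
    using pos m by (intro divide_left_mono) auto
  moreover have "(\<bar>\<alpha>\<bar>/m + 4*M) * r \<le> (\<bar>\<alpha>\<bar>/m + 4*M) * R"
    using y M m unfolding r_def by (intro mult_left_mono) auto
  moreover have "lam*\<theta>*R\<^sup>2/4 \<le> lam*\<theta>*r\<^sup>2"
  proof -
    have "(R/2)\<^sup>2 \<le> r\<^sup>2" using y unfolding r_def by (intro power_mono) auto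
    then show ?thesis using pos \<theta> by (simp add: power_divide mult_left_mono)
  qed
  ultimately show False using big by linarith
qed

lemma divergence_normalized_gradient:
  fixes g :: "real \<times> real \<Rightarrow> real \<times> real"
  assumes dg: "(g has_derivative X) (at x)" and n: "norm (g x) < 1"
  shows "divergence (\<lambda>q. (1 / sqrt (1 - (norm (g q))\<^sup>2)) *\<^sub>R g q) x
     = maximal_operator (g x) X / (sqrt (1 - g x \<bullet> g x))^3"
proof -
  define G where "G = g x"
  define W where "W = sqrt (1 - G \<bullet> G)"
  have GG: "G \<bullet> G < 1" using n by (simp add: G_def power2_norm_eq_inner[symmetric] abs_square_less_1)
  have W: "W > 0" using GG by (simp add: W_def)
  have lin: "linear X" using dg has_derivative_linear by blast
  define DV where "DV = (\<lambda>h. (1 / W) *\<^sub>R X h + ((G \<bullet> X h) / W^3) *\<^sub>R G)"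
  have "((\<lambda>q. (1 / sqrt (1 - g q \<bullet> g q)) *\<^sub>R g q) has_derivative DV) (at x)"
    apply (rule derivative_eq_intros dg refl)+
    using GG apply (simp add: G_def)
    apply (rule derivative_eq_intros dg refl)+
    using GG apply (simp add: G_def)
    apply (rule refl)
    apply (rule dg)
    unfolding DV_def W_def G_def
    apply (rule ext)
    apply (simp add: inner_commute power3_eq_cube divide_simps)
    done
  then have "((\<lambda>q. (1 / sqrt (1 - (norm (g q))\<^sup>2)) *\<^sub>R g q) has_derivative DV) (at x)"
    by (simp add: power2_norm_eq_inner)
  then have "(SOME D. ((\<lambda>q. (1 / sqrt (1 - (norm (g q))\<^sup>2)) *\<^sub>R g q) has_derivative D) (at x)) = DV"
    using has_derivative_unique by blast
  then have div: "divergence (\<lambda>q. (1 / sqrt (1 - (norm (g q))\<^sup>2)) *\<^sub>R g q) x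
      = fst (DV (1,0)) + snd (DV (0,1))"
    unfolding divergence_def Let_def by simp
  have W3: "W^3 = W * (1 - G \<bullet> G)" using GG by (simp add: W_def power3_eq_cube)
  have tr: "fst (DV (1,0)) + snd (DV (0,1))
      = (1/W) * plane_trace X + (fst G * (G \<bullet> X (1,0)) + snd G * (G \<bullet> X (0,1))) / W^3"
    unfolding DV_def plane_trace_def by (simp add: add_divide_distrib mult.commute)
  have "(1/W) * plane_trace X = (1 - G \<bullet> G) * plane_trace X / W^3"
    unfolding W3 using W GG by (simp add: field_simps)
  moreover have "fst G * (G \<bullet> X (1,0)) + snd G * (G \<bullet> X (0,1)) = G \<bullet> X G"
    unfolding linear_apply_coordinates[OF lin, of G] by (simp add: inner_add_right)
  ultimately have "fst (DV (1,0)) + snd (DV (0,1)) = maximal_operator G X / W^3"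
    unfolding tr maximal_operator_def by (simp add: add_divide_distrib)
  then show ?thesis using div unfolding W_def G_def by simp
qed

locale singular_maximal_solution =
  fixes \<alpha> :: real and \<Omega> :: "(real \<times> real) set" and u :: "real \<times> real \<Rightarrow> real"
    and g :: "real \<times> real \<Rightarrow> real \<times> real" and X :: "real \<times> real \<Rightarrow> real \<times> real \<Rightarrow> real \<times> real"
  assumes open_domain: "open \<Omega>"
    and gradient: "p \<in> \<Omega> \<Longrightarrow> (u has_derivative (\<lambda>h. g p \<bullet> h)) (at p)"
    and hessian: "p \<in> \<Omega> \<Longrightarrow> (g has_derivative X p) (at p)"
    and hessian_continuous: "continuous_on \<Omega> (\<lambda>p. X p v)"
    and positive: "p \<in> \<Omega> \<Longrightarrow> u p > 0"
    and spacelike: "p \<in> \<Omega> \<Longrightarrow> norm (g p) < 1"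
    and equation: "p \<in> \<Omega> \<Longrightarrow> maximal_operator (g p) (X p) = \<alpha> * (1 - g p \<bullet> g p) / u p"
begin

lemma continuous_on_u: "continuous_on \<Omega> u"
  by (rule has_derivative_continuous_on) (use gradient in \<open>blast intro: has_derivative_at_withinI\<close>)

lemma continuous_on_g: "continuous_on \<Omega> g"
  by (rule has_derivative_continuous_on) (use hessian in \<open>blast intro: has_derivative_at_withinI\<close>)

lemma linear_hessian: "p \<in> \<Omega> \<Longrightarrow> linear (X p)"
  using hessian has_derivative_linear by blast

end

lemma alpha_singular_maximal_graph_solution:
  assumes "alpha_singular_maximal_graph \<alpha> \<Omega> u"
  obtains g X where "singular_maximal_solution \<alpha> \<Omega> u g X"
proof -
  obtain g X where o: "open \<Omega>" and gr: "is_gradient_on \<Omega> u g"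
    and d2: "\<forall>p\<in>\<Omega>. (g has_derivative X p) (at p)" and c: "\<forall>v. continuous_on \<Omega> (\<lambda>p. X p v)"
    and up: "\<forall>p\<in>\<Omega>. u p > 0" and n: "\<forall>p\<in>\<Omega>. norm (g p) < 1"
    and eq: "\<forall>p\<in>\<Omega>. divergence (\<lambda>q. (1 / sqrt (1 - (norm (g q))\<^sup>2)) *\<^sub>R g q) p
                   = \<alpha> / (u p * sqrt (1 - (norm (g p))\<^sup>2))"
    using assms unfolding alpha_singular_maximal_graph_def by blast
  have "maximal_operator (g p) (X p) = \<alpha> * (1 - g p \<bullet> g p) / u p" if p: "p \<in> \<Omega>" for p
  proof -
    define s where "s = 1 - g p \<bullet> g p"
    have s: "s > 0" using n p by (simp add: s_def power2_norm_eq_inner[symmetric] abs_square_less_1)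
    have "maximal_operator (g p) (X p) / (sqrt s)^3 = \<alpha> / (u p * sqrt s)"
      using divergence_normalized_gradient[of g "X p" p] d2 n eq p
      by (simp add: s_def power2_norm_eq_inner)
    then have "maximal_operator (g p) (X p) = \<alpha> * (sqrt s)^3 / (u p * sqrt s)"
      using s by (simp add: field_simps)
    also have "\<dots> = \<alpha> * s / u p"
      using s up p by (simp add: power3_eq_cube field_simps)
    finally show ?thesis by (simp add: s_def)
  qed
  with o gr d2 c up n show ?thesis
    by (intro that) (unfold_locales, auto simp: is_gradient_on_def)
qed

lemma has_real_derivative_along_line:
  fixes f :: "real \<times> real \<Rightarrow> real"
  assumes "(f has_derivative (\<lambda>h. G \<bullet> h)) (at (a + t *\<^sub>R b))"
  shows "((\<lambda>s. f (a + s *\<^sub>R b)) has_real_derivative (G \<bullet> b)) (at t)"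
proof -
  have "((\<lambda>s. a + s *\<^sub>R b) has_derivative (\<lambda>s. s *\<^sub>R b)) (at t)"
    by (auto intro!: derivative_eq_intros)
  moreover have "(f has_derivative (\<lambda>h. G \<bullet> h)) (at ((\<lambda>s. a + s *\<^sub>R b) t))" using assms by simp
  ultimately have "((\<lambda>s. f (a + s *\<^sub>R b)) has_derivative (\<lambda>s. s * (G \<bullet> b))) (at t)"
    by (auto dest: has_derivative_compose simp: o_def)
  moreover have "(\<lambda>s. s * (G \<bullet> b)) = (*) (G \<bullet> b)" by (auto simp: fun_eq_iff)
  ultimately show ?thesis by (simp add: has_field_derivative_def)
qed

lemma local_min_gradient_zero:
  fixes f :: "'a::real_inner \<Rightarrow> real"
  assumes "open S" "x0 \<in> S" "(f has_derivative (\<lambda>h. G \<bullet> h)) (at x0)"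
    and "\<And>x. x \<in> S \<Longrightarrow> f x0 \<le> f x"
  shows "G = 0"
proof -
  have "eventually (\<lambda>y. f x0 \<le> f y) (at x0)"
    using assms by (metis eventually_at_topological)
  from has_derivative_local_min[OF assms(3) this] show ?thesis
    by (metis inner_eq_zero_iff)
qed

text \<open>Only the gradient G is assumed differentiable, and only at x0, so the minimum is compared
along a segment by the mean value theorem.\<close>

lemma local_min_hessian_nonneg:
  fixes f :: "real \<times> real \<Rightarrow> real" and G :: "real \<times> real \<Rightarrow> real \<times> real"
  assumes S: "open S" "x0 \<in> S"
    and df: "\<And>x. x \<in> S \<Longrightarrow> (f has_derivative (\<lambda>h. G x \<bullet> h)) (at x)"
    and dG: "(G has_derivative Y) (at x0)"
    and min: "\<And>x. x \<in> S \<Longrightarrow> f x0 \<le> f x"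
  shows "Y h \<bullet> h \<ge> 0"
proof (rule ccontr)
  assume neg: "\<not> Y h \<bullet> h \<ge> 0"
  have G0: "G x0 = 0" using local_min_gradient_zero[OF S df[OF S(2)] min] .
  have "((\<lambda>t. x0 + t *\<^sub>R h) has_derivative (\<lambda>t. t *\<^sub>R h)) (at 0)"
    by (auto intro!: derivative_eq_intros)
  from has_derivative_compose[OF this] dG
  have "((\<lambda>t. G (x0 + t *\<^sub>R h)) has_derivative (\<lambda>t. Y (t *\<^sub>R h))) (at 0)" by (simp add: o_def)
  then have "((\<lambda>t. G (x0 + t *\<^sub>R h) \<bullet> h) has_derivative (\<lambda>t. Y (t *\<^sub>R h) \<bullet> h)) (at 0)"
    by (auto intro!: derivative_eq_intros)
  then have "((\<lambda>t. G (x0 + t *\<^sub>R h) \<bullet> h) has_real_derivative (Y h \<bullet> h)) (at 0)"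
    by (simp add: linear_cmul[OF has_derivative_linear[OF dG]] has_field_derivative_def
        mult.commute[of _ "Y h \<bullet> h"] fun_eq_iff[symmetric])
  from DERIV_neg_dec_right[OF this] neg obtain d where d: "d > 0"
    "\<And>t. t > 0 \<Longrightarrow> t < d \<Longrightarrow> G (x0 + t *\<^sub>R h) \<bullet> h < 0" using G0 by force
  have "h \<noteq> 0" using neg by (auto simp: linear_0[OF has_derivative_linear[OF dG]])
  obtain e where e: "e > 0" "ball x0 e \<subseteq> S" using S openE by blast
  define t where "t = min (d/2) (e / (2 * norm h))"
  have t: "t > 0" "t < d" "t * norm h < e"
    using d e \<open>h \<noteq> 0\<close> by (auto simp: t_def min_def field_simps)
  have inS: "x0 + s *\<^sub>R h \<in> S" if "0 \<le> s" "s \<le> t" for s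
  proof -
    have "norm (s *\<^sub>R h) \<le> t * norm h" using that by (simp add: mult_right_mono)
    then show ?thesis using t e by (auto simp: dist_norm)
  qed
  have "\<exists>\<xi>>0. \<xi> < t \<and> f (x0 + t *\<^sub>R h) - f (x0 + 0 *\<^sub>R h) = (t - 0) * (G (x0 + \<xi> *\<^sub>R h) \<bullet> h)"
  proof (rule MVT2)
    fix s assume "0 \<le> s" "s \<le> t"
    then show "((\<lambda>t. f (x0 + t *\<^sub>R h)) has_real_derivative G (x0 + s *\<^sub>R h) \<bullet> h) (at s)"
      using inS df by (intro has_real_derivative_along_line) auto
  qed (use t in simp)
  then obtain \<xi> where "0 < \<xi>" "\<xi> < t" "f (x0 + t *\<^sub>R h) - f x0 = t * (G (x0 + \<xi> *\<^sub>R h) \<bullet> h)"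
    by auto
  moreover from this d(2)[of \<xi>] t have "G (x0 + \<xi> *\<^sub>R h) \<bullet> h < 0" by simp
  ultimately have "f (x0 + t *\<^sub>R h) < f x0" using mult_pos_neg[OF t(1)] by fastforce
  then show False using min inS[of t] t by fastforce
qed

lemma gaussian_has_derivative:
  fixes z x :: "real \<times> real"
  shows "((\<lambda>x. exp (-lam * ((x - z) \<bullet> (x - z)))) has_derivative
     (\<lambda>h. ((-2*lam*exp (-lam * ((x - z) \<bullet> (x - z)))) *\<^sub>R (x - z)) \<bullet> h)) (at x)"
  by (rule derivative_eq_intros refl)+ (simp add: fun_eq_iff inner_commute algebra_simps)

lemma gaussian_gradient_has_derivative:
  fixes z x :: "real \<times> real"
  shows "((\<lambda>x. (-2*lam*exp (-lam * ((x - z) \<bullet> (x - z)))) *\<^sub>R (x - z)) has_derivative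
     (\<lambda>h. (-2*lam*exp (-lam * ((x - z) \<bullet> (x - z)))) *\<^sub>R h
        + (4*lam\<^sup>2*exp (-lam * ((x - z) \<bullet> (x - z)))*((x - z) \<bullet> h)) *\<^sub>R (x - z))) (at x)"
  by (rule derivative_eq_intros refl)+ (simp add: fun_eq_iff inner_commute algebra_simps power2_eq_square)

lemma continuous_pos_lower_bound:
  fixes f :: "'a::metric_space \<Rightarrow> real"
  assumes "compact K" "K \<noteq> {}" "continuous_on K f" "\<And>x. x \<in> K \<Longrightarrow> f x > 0"
  obtains m where "m > 0" "\<And>x. x \<in> K \<Longrightarrow> m \<le> f x"
  using continuous_attains_inf[OF assms(1-3)] assms(4) by blast

locale touching_ball =
  S1: singular_maximal_solution \<alpha> \<Omega>1 u1 g1 X1 + S2: singular_maximal_solution \<alpha> \<Omega>2 u2 g2 X2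
  for \<alpha> \<Omega>1 u1 g1 X1 \<Omega>2 u2 g2 X2 +
  fixes z :: "real \<times> real" and R :: real
  assumes radius_pos: "R > 0"
    and cball_subset: "cball z R \<subseteq> \<Omega>1 \<inter> \<Omega>2"
    and above: "x \<in> cball z R \<Longrightarrow> u2 x \<le> u1 x"
    and strictly_above: "x \<in> ball z R \<Longrightarrow> u2 x < u1 x"
begin

definition bump :: "real \<Rightarrow> real \<times> real \<Rightarrow> real" where
  "bump lam = (\<lambda>x. exp (-lam * ((x - z) \<bullet> (x - z))))"

definition barrier :: "real \<Rightarrow> real \<Rightarrow> real \<times> real \<Rightarrow> real" where
  "barrier m0 lam = (\<lambda>x. u1 x - u2 x - m0 * (bump lam x - exp (-lam * R\<^sup>2)))"

lemma bump_on_sphere: "dist z x = R \<Longrightarrow> bump lam x = exp (-lam * R\<^sup>2)"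
  by (simp add: bump_def power2_norm_eq_inner[symmetric] dist_norm norm_minus_commute)

lemma barrier_has_derivative:
  assumes "x \<in> \<Omega>1 \<inter> \<Omega>2"
  shows "(barrier m0 lam has_derivative
    (\<lambda>h. (g1 x - g2 x - m0 *\<^sub>R ((-2*lam*bump lam x) *\<^sub>R (x - z))) \<bullet> h)) (at x)"
proof -
  have "(barrier m0 lam has_derivative (\<lambda>h. g1 x \<bullet> h - g2 x \<bullet> h
      - m0 * (((-2*lam*bump lam x) *\<^sub>R (x - z)) \<bullet> h - 0))) (at x)"
    unfolding barrier_def bump_def using assms
    by (intro has_derivative_diff S1.gradient S2.gradient has_derivative_mult_right
        gaussian_has_derivative has_derivative_const) auto
  then show ?thesis by (simp add: inner_diff_left algebra_simps)
qed

lemma barrier_gradient_has_derivative: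
  assumes "x \<in> \<Omega>1 \<inter> \<Omega>2"
  shows "((\<lambda>x. g1 x - g2 x - m0 *\<^sub>R ((-2*lam*bump lam x) *\<^sub>R (x - z))) has_derivative
    (\<lambda>h. X1 x h - X2 x h - m0 *\<^sub>R ((-2*lam*bump lam x) *\<^sub>R h
       + (4*lam\<^sup>2*bump lam x*((x - z) \<bullet> h)) *\<^sub>R (x - z)))) (at x)"
  unfolding bump_def using assms
  by (intro has_derivative_diff[OF has_derivative_diff[OF S1.hessian S2.hessian]
        has_derivative_scaleR_right[OF gaussian_gradient_has_derivative]]) auto

lemma uniform_bounds:
  obtains m \<theta> M where "m > 0" "\<And>x. x \<in> cball z R \<Longrightarrow> m \<le> u1 x \<and> m \<le> u2 x"
    "\<theta> > 0" "\<And>x. x \<in> cball z R \<Longrightarrow> \<theta> \<le> 1 - g1 x \<bullet> g1 x"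
    "\<And>x. x \<in> cball z R \<Longrightarrow> norm (X2 x (1,0)) \<le> M \<and> norm (X2 x (0,1)) \<le> M"
proof -
  have K: "compact (cball z R)" "cball z R \<noteq> {}" using radius_pos by auto
  have sub: "cball z R \<subseteq> \<Omega>1" "cball z R \<subseteq> \<Omega>2" using cball_subset by auto
  obtain m1 where m1: "m1 > 0" "\<And>x. x \<in> cball z R \<Longrightarrow> m1 \<le> u1 x"
    using continuous_pos_lower_bound[OF K continuous_on_subset[OF S1.continuous_on_u sub(1)]]
      S1.positive sub(1) by blast
  obtain m2 where m2: "m2 > 0" "\<And>x. x \<in> cball z R \<Longrightarrow> m2 \<le> u2 x"
    using continuous_pos_lower_bound[OF K continuous_on_subset[OF S2.continuous_on_u sub(2)]]
      S2.positive sub(2) by blast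
  obtain \<theta> where \<theta>: "\<theta> > 0" "\<And>x. x \<in> cball z R \<Longrightarrow> \<theta> \<le> 1 - g1 x \<bullet> g1 x"
  proof (rule continuous_pos_lower_bound[OF K])
    show "continuous_on (cball z R) (\<lambda>x. 1 - g1 x \<bullet> g1 x)"
      by (intro continuous_intros continuous_on_subset[OF S1.continuous_on_g sub(1)])
    fix x assume "x \<in> cball z R"
    then have "norm (g1 x) < 1" using S1.spacelike sub(1) by blast
    then show "1 - g1 x \<bullet> g1 x > 0" by (simp add: power2_norm_eq_inner[symmetric] abs_square_less_1)
  qed blast
  obtain Ma where Ma: "\<And>x. x \<in> cball z R \<Longrightarrow> norm (X2 x (1,0)) \<le> Ma"
    using continuous_on_compact_bound[OF K(1) continuous_on_subset[OF S2.hessian_continuous sub(2)]]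
    by blast
  obtain Mb where Mb: "\<And>x. x \<in> cball z R \<Longrightarrow> norm (X2 x (0,1)) \<le> Mb"
    using continuous_on_compact_bound[OF K(1) continuous_on_subset[OF S2.hessian_continuous sub(2)]]
    by blast
  show thesis
    by (rule that[of "min m1 m2" \<theta> "max Ma Mb"])
      (use m1 m2 \<theta> Ma Mb in \<open>auto simp: min_le_iff_disj le_max_iff_disj\<close>)
qed

lemma barrier_interior_min:
  assumes m: "m > 0" "\<And>x. x \<in> cball z R \<Longrightarrow> m \<le> u1 x \<and> m \<le> u2 x"
    and \<theta>: "\<theta> > 0" "\<And>x. x \<in> cball z R \<Longrightarrow> \<theta> \<le> 1 - g1 x \<bullet> g1 x"
    and M: "\<And>x. x \<in> cball z R \<Longrightarrow> norm (X2 x (1,0)) \<le> M \<and> norm (X2 x (0,1)) \<le> M"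
    and lam: "lam \<ge> 1" "lam*\<theta>*R\<^sup>2/4 > 1 + \<bar>\<alpha>\<bar>/(4*m\<^sup>2) + (\<bar>\<alpha>\<bar>/m + 4*M) * R"
    and m0: "m0 > 0"
    and x0: "x0 \<in> ball z R - cball z (R/2)"
    and min: "\<And>x. x \<in> ball z R - cball z (R/2) \<Longrightarrow> barrier m0 lam x0 \<le> barrier m0 lam x"
  shows "m0 * bump lam x0 < u1 x0 - u2 x0"
proof (rule ccontr)
  assume below: "\<not> m0 * bump lam x0 < u1 x0 - u2 x0"
  define S where "S = ball z R - cball z (R/2)"
  have S: "open S" "S \<subseteq> \<Omega>1 \<inter> \<Omega>2" using cball_subset by (auto simp: S_def)
  have x0S: "x0 \<in> S" and x0K: "x0 \<in> cball z R" using x0 by (auto simp: S_def)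
  then have x0\<Omega>: "x0 \<in> \<Omega>1" "x0 \<in> \<Omega>2" using S by auto
  have df: "\<And>x. x \<in> S \<Longrightarrow> (barrier m0 lam has_derivative
      (\<lambda>h. (g1 x - g2 x - m0 *\<^sub>R ((-2*lam*bump lam x) *\<^sub>R (x - z))) \<bullet> h)) (at x)"
    using S(2) barrier_has_derivative by blast
  have min': "\<And>x. x \<in> S \<Longrightarrow> barrier m0 lam x0 \<le> barrier m0 lam x"
    using min by (simp add: S_def)
  have grad: "g1 x0 - g2 x0 - m0 *\<^sub>R ((-2*lam*bump lam x0) *\<^sub>R (x0 - z)) = 0"
    by (rule local_min_gradient_zero[OF S(1) x0S df[OF x0S] min'])
  have hess: "0 \<le> (X1 x0 h - X2 x0 h - m0 *\<^sub>R ((-2*lam*bump lam x0) *\<^sub>R h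
       + (4*lam\<^sup>2*bump lam x0*((x0 - z) \<bullet> h)) *\<^sub>R (x0 - z))) \<bullet> h" for h
    using x0\<Omega> by (intro local_min_hessian_nonneg[OF S(1) x0S df _ min'] barrier_gradient_has_derivative) auto
  show False
  proof (rule maximal_operator_barrier_absurd)
    show "maximal_operator (g1 x0) (X1 x0) = \<alpha> * (1 - g1 x0 \<bullet> g1 x0) / u1 x0"
      "maximal_operator (g2 x0) (X2 x0) = \<alpha> * (1 - g2 x0 \<bullet> g2 x0) / u2 x0"
      using S1.equation S2.equation x0\<Omega> by auto
    show "m > 0" "m \<le> u1 x0" "m \<le> u2 x0" using m x0K by auto
    show "0 \<le> u1 x0 - u2 x0" using above[OF x0K] by simp
    show "u1 x0 - u2 x0 \<le> m0 * bump lam x0" using below by simp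
    show "\<theta> > 0" "\<theta> \<le> 1 - g1 x0 \<bullet> g1 x0" using \<theta> x0K by auto
    show "norm (g2 x0) \<le> 1" using S2.spacelike x0\<Omega> by (simp add: less_imp_le)
    show "linear (X2 x0)" using S2.linear_hessian x0\<Omega> by blast
    show "norm (X2 x0 (1,0)) \<le> M" "norm (X2 x0 (0,1)) \<le> M" using M x0K by auto
    show "g1 x0 - g2 x0 = m0 *\<^sub>R ((-2*lam*bump lam x0) *\<^sub>R (x0 - z))"
      using grad by (simp add: algebra_simps)
    show "m0 > 0" "bump lam x0 > 0" "lam \<ge> 1" using m0 lam by (auto simp: bump_def)
    show "R/2 \<le> norm (x0 - z)" "norm (x0 - z) \<le> R"
      using x0 by (auto simp: dist_norm norm_minus_commute)
  qed (use hess lam in auto)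
qed

lemma continuous_on_difference: "continuous_on (cball z R) (\<lambda>x. u1 x - u2 x)"
proof -
  have "continuous_on (cball z R) u1" "continuous_on (cball z R) u2"
    using cball_subset continuous_on_subset[OF S1.continuous_on_u] continuous_on_subset[OF S2.continuous_on_u]
    by auto
  then show ?thesis by (rule continuous_on_diff)
qed

lemma continuous_on_barrier: "continuous_on (cball z R) (barrier m0 lam)"
  unfolding barrier_def bump_def by (intro continuous_intros continuous_on_difference)

lemma barrier_annulus_min_nonneg:
  assumes bounds: "m > 0" "\<And>x. x \<in> cball z R \<Longrightarrow> m \<le> u1 x \<and> m \<le> u2 x"
    "\<theta> > 0" "\<And>x. x \<in> cball z R \<Longrightarrow> \<theta> \<le> 1 - g1 x \<bullet> g1 x"
    "\<And>x. x \<in> cball z R \<Longrightarrow> norm (X2 x (1,0)) \<le> M \<and> norm (X2 x (0,1)) \<le> M"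
    and lam: "lam \<ge> 1" "lam*\<theta>*R\<^sup>2/4 > 1 + \<bar>\<alpha>\<bar>/(4*m\<^sup>2) + (\<bar>\<alpha>\<bar>/m + 4*M) * R"
    and m0: "m0 > 0" and inner: "\<And>x. x \<in> sphere z (R/2) \<Longrightarrow> m0 \<le> u1 x - u2 x"
    and x0: "x0 \<in> cball z R - ball z (R/2)"
    and min: "\<forall>x\<in>cball z R - ball z (R/2). barrier m0 lam x0 \<le> barrier m0 lam x"
  shows "0 \<le> barrier m0 lam x0"
proof -
  have c: "0 \<le> exp (-lam * R\<^sup>2)" "bump lam x0 \<le> 1" using lam by (auto simp: bump_def)
  consider "dist z x0 = R/2" | "dist z x0 = R" | "x0 \<in> ball z R - cball z (R/2)"
    using x0 by fastforce
  then show ?thesis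
  proof cases
    case 1
    then have "m0 \<le> u1 x0 - u2 x0" using inner by simp
    moreover have "m0 * (bump lam x0 - exp (-lam * R\<^sup>2)) \<le> m0 * 1"
      using m0 c by (intro mult_left_mono) linarith+
    ultimately show ?thesis by (simp add: barrier_def)
  next
    case 2
    then show ?thesis using above[of x0] by (simp add: barrier_def bump_on_sphere)
  next
    case 3
    moreover have "\<And>x. x \<in> ball z R - cball z (R/2) \<Longrightarrow> barrier m0 lam x0 \<le> barrier m0 lam x"
      using min by simp
    ultimately have "m0 * bump lam x0 < u1 x0 - u2 x0"
      using barrier_interior_min[OF bounds lam m0] by blast
    moreover have "0 \<le> m0 * exp (-lam * R\<^sup>2)" using m0 c by simp
    ultimately show ?thesis by (simp add: barrier_def algebra_simps)
  qed
qed

lemma barrier_nonneg: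
  assumes m0: "m0 > 0" and inner: "\<And>x. x \<in> sphere z (R/2) \<Longrightarrow> m0 \<le> u1 x - u2 x"
  obtains lam where "lam \<ge> 1" "\<And>x. x \<in> cball z R - ball z (R/2) \<Longrightarrow> 0 \<le> barrier m0 lam x"
proof -
  obtain m \<theta> M where bounds: "m > 0" "\<And>x. x \<in> cball z R \<Longrightarrow> m \<le> u1 x \<and> m \<le> u2 x"
    "\<theta> > 0" "\<And>x. x \<in> cball z R \<Longrightarrow> \<theta> \<le> 1 - g1 x \<bullet> g1 x"
    "\<And>x. x \<in> cball z R \<Longrightarrow> norm (X2 x (1,0)) \<le> M \<and> norm (X2 x (0,1)) \<le> M"
    by (rule uniform_bounds) blast
  define C where "C = 1 + \<bar>\<alpha>\<bar>/(4*m\<^sup>2) + (\<bar>\<alpha>\<bar>/m + 4*M) * R"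
  define lam where "lam = max 1 (4 * (C + 1) / (\<theta> * R\<^sup>2))"
  have lam: "lam \<ge> 1" by (simp add: lam_def)
  have big: "lam*\<theta>*R\<^sup>2/4 > C"
  proof -
    have "\<theta> * R\<^sup>2 > 0" using bounds(3) radius_pos by simp
    moreover have "lam \<ge> 4 * (C + 1) / (\<theta> * R\<^sup>2)" by (simp add: lam_def)
    ultimately have "lam * (\<theta> * R\<^sup>2) \<ge> 4 * (C + 1)" by (simp add: field_simps)
    then show ?thesis by (simp add: algebra_simps)
  qed
  define A where "A = cball z R - ball z (R/2)"
  have A: "compact A" "A \<noteq> {}" "continuous_on A (barrier m0 lam)"
  proof -
    show "compact A" unfolding A_def by (intro compact_diff) auto
    have "z + (R, 0) \<in> A" using radius_pos by (simp add: A_def dist_norm)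
    then show "A \<noteq> {}" by blast
    show "continuous_on A (barrier m0 lam)"
      by (rule continuous_on_subset[OF continuous_on_barrier]) (auto simp: A_def)
  qed
  obtain x0 where x0: "x0 \<in> A" "\<forall>x\<in>A. barrier m0 lam x0 \<le> barrier m0 lam x"
    using continuous_attains_inf[OF A] by blast
  have "0 \<le> barrier m0 lam x0"
    using barrier_annulus_min_nonneg[OF bounds lam big[unfolded C_def] m0 inner] x0
    unfolding A_def by blast
  then have "\<And>x. x \<in> A \<Longrightarrow> 0 \<le> barrier m0 lam x" using x0(2) by fastforce
  then show thesis unfolding A_def by (rule that[OF lam])
qed

lemma contact_on_sphere_not_tangent:
  assumes q: "dist z q = R" and contact: "u1 q = u2 q"
  shows "g1 q \<noteq> g2 q"
proof
  assume tangent: "g1 q = g2 q"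
  have sphere: "compact (sphere z (R/2))" "sphere z (R/2) \<noteq> {}" using radius_pos by auto
  have "continuous_on (sphere z (R/2)) (\<lambda>x. u1 x - u2 x)"
    using radius_pos by (intro continuous_on_subset[OF continuous_on_difference]) auto
  moreover have "\<And>x. x \<in> sphere z (R/2) \<Longrightarrow> 0 < u1 x - u2 x"
    using strictly_above radius_pos by simp
  ultimately obtain m0 where m0: "m0 > 0" "\<And>x. x \<in> sphere z (R/2) \<Longrightarrow> m0 \<le> u1 x - u2 x"
    using continuous_pos_lower_bound[OF sphere] by blast
  obtain lam where lam: "lam \<ge> 1"
    and nonneg: "\<And>x. x \<in> cball z R - ball z (R/2) \<Longrightarrow> 0 \<le> barrier m0 lam x"
    using barrier_nonneg[OF m0] by blast
  have "q \<in> \<Omega>1 \<inter> \<Omega>2" using q cball_subset by auto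
  define v where "v = g1 q - g2 q - m0 *\<^sub>R ((-2*lam*bump lam q) *\<^sub>R (q - z))"
  have deriv: "((\<lambda>s. barrier m0 lam (q + s *\<^sub>R (z - q))) has_real_derivative v \<bullet> (z - q)) (at 0)"
    using barrier_has_derivative[OF \<open>q \<in> \<Omega>1 \<inter> \<Omega>2\<close>, of m0 lam]
    unfolding v_def by (intro has_real_derivative_along_line) simp
  have "v \<bullet> (z - q) < 0"
  proof -
    have "v = (- (2*m0*lam*bump lam q)) *\<^sub>R (z - q)"
      unfolding v_def tangent by (simp add: scaleR_diff_right algebra_simps)
    moreover have "(z - q) \<bullet> (z - q) = R\<^sup>2"
      using q by (simp add: dist_norm power2_norm_eq_inner[symmetric])
    ultimately have "v \<bullet> (z - q) = - (2*m0*lam*bump lam q * R\<^sup>2)" by simp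
    moreover have "2*m0*lam*bump lam q * R\<^sup>2 > 0" using m0 lam radius_pos by (simp add: bump_def)
    ultimately show ?thesis by linarith
  qed
  from DERIV_neg_dec_right[OF deriv this] obtain d where d: "d > 0"
    "\<And>h. 0 < h \<Longrightarrow> h < d \<Longrightarrow> barrier m0 lam (q + h *\<^sub>R (z - q)) < barrier m0 lam q"
    by auto
  define h where "h = min (d/2) (1/2)"
  have h: "0 < h" "h < d" "h \<le> 1/2" using d by (auto simp: h_def)
  have "z - (q + h *\<^sub>R (z - q)) = (1 - h) *\<^sub>R (z - q)" by (simp add: algebra_simps)
  then have "dist z (q + h *\<^sub>R (z - q)) = R - h * R"
    using h q by (simp add: dist_norm left_diff_distrib)
  moreover have "0 \<le> h * R" "h * R \<le> R/2" using h radius_pos by (auto intro: mult_right_mono)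
  ultimately have "q + h *\<^sub>R (z - q) \<in> cball z R - ball z (R/2)" by simp
  moreover have "barrier m0 lam q = 0" using contact q by (simp add: barrier_def bump_on_sphere)
  ultimately show False using nonneg d(2)[OF h(1,2)] by fastforce
qed

end

lemma nearest_contact_touching_ball:
  assumes S1: "singular_maximal_solution \<alpha> \<Omega>1 u1 g1 X1"
    and S2: "singular_maximal_solution \<alpha> \<Omega>2 u2 g2 X2"
    and \<rho>: "cball p \<rho> \<subseteq> \<Omega>1 \<inter> \<Omega>2"
    and above: "\<And>x. x \<in> cball p \<rho> \<Longrightarrow> u2 x \<le> u1 x" and contact: "u1 p = u2 p"
    and z: "z \<in> ball p (\<rho>/2)" "u1 z \<noteq> u2 z"
  obtains q R where "touching_ball \<alpha> \<Omega>1 u1 g1 X1 \<Omega>2 u2 g2 X2 z R"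
    "dist z q = R" "u1 q = u2 q" "q \<in> ball p \<rho>"
proof -
  have "0 \<le> \<rho>" using z(1) zero_le_dist[of p z] by (simp only: mem_ball)
  define Z where "Z = {x \<in> cball p \<rho>. u1 x - u2 x = 0}"
  have "continuous_on (cball p \<rho>) u1" "continuous_on (cball p \<rho>) u2"
    using \<rho> continuous_on_subset[OF singular_maximal_solution.continuous_on_u[OF S1]]
      continuous_on_subset[OF singular_maximal_solution.continuous_on_u[OF S2]] by auto
  then have "closed Z" unfolding Z_def
    by (intro continuous_closed_preimage_constant continuous_on_diff closed_cball)
  moreover have "p \<in> Z" using contact \<open>0 \<le> \<rho>\<close> by (simp add: Z_def)
  ultimately obtain q where q: "q \<in> Z" and nearest: "\<And>y. y \<in> Z \<Longrightarrow> dist z q \<le> dist z y"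
    using distance_attains_inf[of Z z] by blast
  define R where "R = dist z q"
  have "R > 0" using q z(2) by (auto simp: R_def Z_def)
  have "R < \<rho>/2" using nearest[OF \<open>p \<in> Z\<close>] z by (simp add: R_def dist_commute)
  have ball_sub: "cball z R \<subseteq> ball p \<rho>"
  proof
    fix x assume "x \<in> cball z R"
    then show "x \<in> ball p \<rho>"
      using \<open>R < \<rho>/2\<close> z dist_triangle[of p x z] by simp
  qed
  have "touching_ball \<alpha> \<Omega>1 u1 g1 X1 \<Omega>2 u2 g2 X2 z R"
  proof (rule touching_ball.intro[OF S1 S2 touching_ball_axioms.intro])
    show "R > 0" by fact
    show "cball z R \<subseteq> \<Omega>1 \<inter> \<Omega>2" using ball_sub \<rho> ball_subset_cball by blast
    show "u2 x \<le> u1 x" if "x \<in> cball z R" for x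
      using ball_sub ball_subset_cball[of p \<rho>] above that by blast
    show "u2 x < u1 x" if "x \<in> ball z R" for x
    proof -
      have "x \<in> cball p \<rho>"
        using ball_subset_cball[of z R] ball_subset_cball[of p \<rho>] ball_sub that by blast
      moreover have "x \<notin> Z" using nearest[of x] that by (auto simp: R_def)
      ultimately show ?thesis using above[of x] by (auto simp: Z_def)
    qed
  qed
  moreover have "u1 q = u2 q" using q by (simp add: Z_def)
  moreover have "q \<in> ball p \<rho>" using ball_sub by (auto simp: R_def)
  ultimately show thesis using that R_def by blast
qed

lemma coincide_near_contact:
  assumes S1: "singular_maximal_solution \<alpha> \<Omega>1 u1 g1 X1"
    and S2: "singular_maximal_solution \<alpha> \<Omega>2 u2 g2 X2"
    and \<rho>: "cball p \<rho> \<subseteq> \<Omega>1 \<inter> \<Omega>2"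
    and above: "\<And>x. x \<in> cball p \<rho> \<Longrightarrow> u2 x \<le> u1 x" and contact: "u1 p = u2 p"
    and z: "z \<in> ball p (\<rho>/2)"
  shows "u1 z = u2 z"
proof (rule ccontr)
  assume "u1 z \<noteq> u2 z"
  then obtain q R where T: "touching_ball \<alpha> \<Omega>1 u1 g1 X1 \<Omega>2 u2 g2 X2 z R"
    and q: "dist z q = R" "u1 q = u2 q" "q \<in> ball p \<rho>"
    using nearest_contact_touching_ball[OF S1 S2 \<rho> above contact z] by blast
  have "g1 q - g2 q = 0"
  proof (rule local_min_gradient_zero[OF open_ball \<open>q \<in> ball p \<rho>\<close>])
    have "q \<in> \<Omega>1" "q \<in> \<Omega>2" using q(3) \<rho> ball_subset_cball by blast+
    from has_derivative_diff[OF singular_maximal_solution.gradient[OF S1 this(1)]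
        singular_maximal_solution.gradient[OF S2 this(2)]]
    show "((\<lambda>x. u1 x - u2 x) has_derivative (\<lambda>h. (g1 q - g2 q) \<bullet> h)) (at q)"
      by (simp add: inner_diff_left)
    show "u1 q - u2 q \<le> u1 x - u2 x" if "x \<in> ball p \<rho>" for x
      using above[of x] q(2) that by simp
  qed
  with touching_ball.contact_on_sphere_not_tangent[OF T q(1,2)] show False by simp
qed

theorem proposition4p2:
  fixes \<alpha> :: real and \<Omega>1 \<Omega>2 :: "(real \<times> real) set"
    and u1 u2 :: "real \<times> real \<Rightarrow> real" and p :: "real \<times> real"
  assumes "\<alpha> \<noteq> 0"
    and "alpha_singular_maximal_graph \<alpha> \<Omega>1 u1"
    and "alpha_singular_maximal_graph \<alpha> \<Omega>2 u2"
    and "p \<in> \<Omega>1" and "p \<in> \<Omega>2"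
    and "u1 p = u2 p"
    and "(u1 has_derivative D) (at p)" and "(u2 has_derivative D) (at p)"
    and "\<exists>r>0. \<forall>q\<in>ball p r. u2 q \<le> u1 q"
  shows "\<exists>V. open V \<and> p \<in> V \<and> V \<subseteq> \<Omega>1 \<inter> \<Omega>2 \<and> (\<forall>q\<in>V. u1 q = u2 q)"
proof -
  obtain g1 X1 where S1: "singular_maximal_solution \<alpha> \<Omega>1 u1 g1 X1"
    using alpha_singular_maximal_graph_solution[OF assms(2)] by blast
  obtain g2 X2 where S2: "singular_maximal_solution \<alpha> \<Omega>2 u2 g2 X2"
    using alpha_singular_maximal_graph_solution[OF assms(3)] by blast
  obtain r where r: "r > 0" "\<forall>q\<in>ball p r. u2 q \<le> u1 q" using assms(9) by blast
  have "open (\<Omega>1 \<inter> \<Omega>2 \<inter> ball p r)"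
    using singular_maximal_solution.open_domain[OF S1] singular_maximal_solution.open_domain[OF S2] by auto
  moreover have "p \<in> \<Omega>1 \<inter> \<Omega>2 \<inter> ball p r" using assms(4,5) r(1) by simp
  ultimately obtain e where e: "e > 0" "ball p e \<subseteq> \<Omega>1 \<inter> \<Omega>2 \<inter> ball p r"
    by (rule openE)
  have "cball p (e/2) \<subseteq> ball p e" using e(1) by (simp add: subset_eq)
  then have sub: "cball p (e/2) \<subseteq> \<Omega>1 \<inter> \<Omega>2" and above: "\<forall>x\<in>cball p (e/2). u2 x \<le> u1 x"
    using e(2) r(2) by blast+
  have "u1 q = u2 q" if "q \<in> ball p (e/4)" for q
    using coincide_near_contact[OF S1 S2 sub _ assms(6), of q] above that by simp
  moreover have "ball p (e/4) \<subseteq> \<Omega>1 \<inter> \<Omega>2" using e by auto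
  ultimately show ?thesis using e(1) by (intro exI[of _ "ball p (e/4)"]) auto
qed

end
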